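(* A point $(x,y)\in\mathbb R^2$ belongs to $\mathcal P_0$ if and only if both $x$ and $y$ belong to $\mathbb F_0$.
   Context: An origami pair is a pair $(\mathcal P,\mathcal L)$ where $\mathcal P\subset\mathbb R^2$ is a set of points and $\mathcal L$ is a collection of lines in $\mathbb R^2$ such that: (i) the intersection point of any two non-parallel lines of $\mathcal L$ lies in $\mathcal P$; (ii) for any two distinct points of $\mathcal P$, the line through them is in $\mathcal L$; (iii) for any two distinct points of $\mathcal P$, the perpendicular bisector of the segment joining them is in $\mathcal L$; (iv) if $L_1,L_2\in\mathcal L$, then every line equidistant from $L_1$ and $L_2$ is in $\mathcal L$ (the midline if they are parallel, the angle bisectors if they intersect); (v) if $L_1,L_2\in\mathcal L$, then the mirror reflection of $L_2$ across $L_1$ is in $\mathcal L$. A set $\mathcal P\subset\mathbb R^2$ is closed under origami constructions if there is a collection of lines $\mathcal L$ with $(\mathcal P,\mathcal L)$ an origami pair. The set of origami constructible points is $\mathcal P_0=\bigcap\{\mathcal P : (0,0),(0,1)\in\mathcal P \text{ and } \mathcal P \text{ is closed under origami constructions}\}$. The set of origami numbers is $\mathbb F_0=\{\alpha\in\mathbb R : \exists v_1,v_2\in\mathcal P_0,\ |\alpha|=\operatorname{dist}(v_1,v_2)\}$. *)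

theory Defs
  imports "HOL-Analysis.Analysis"
begin

type_synonym point = "real \<times> real"

definition is_line :: "point set \<Rightarrow> bool" where
  "is_line L \<longleftrightarrow> (\<exists>a b c. (a, b) \<noteq> (0, 0) \<and> L = {(x, y). a * x + b * y = c})"

definition line_through :: "point \<Rightarrow> point \<Rightarrow> point set" where
  "line_through p q = {r. \<exists>t::real. r = (fst p + t * (fst q - fst p), snd p + t * (snd q - snd p))}"

definition perp_bisector :: "point \<Rightarrow> point \<Rightarrow> point set" where
  "perp_bisector p q = {r. dist r p = dist r q}"

text \<open>A line L is equidistant from L1 and L2 if every point of L has the same distance
to L1 as to L2 (for distinct parallel lines: the midline; for intersecting lines: the two
angle bisectors).\<close>
definition equidistant_line :: "point set \<Rightarrow> point set \<Rightarrow> point set \<Rightarrow> bool" where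
  "equidistant_line L L1 L2 \<longleftrightarrow> is_line L \<and> (\<forall>r\<in>L. infdist r L1 = infdist r L2)"

definition reflect :: "point set \<Rightarrow> point \<Rightarrow> point" where
  "reflect L p = (SOME q. (p \<in> L \<and> q = p) \<or> (p \<notin> L \<and> q \<noteq> p \<and> perp_bisector p q = L))"

definition origami_pair :: "point set \<Rightarrow> point set set \<Rightarrow> bool" where
  "origami_pair P \<L> \<longleftrightarrow>
     (\<forall>L\<in>\<L>. is_line L) \<and>
     (\<forall>L1\<in>\<L>. \<forall>L2\<in>\<L>. \<forall>p. L1 \<inter> L2 = {p} \<longrightarrow> p \<in> P) \<and>
     (\<forall>p\<in>P. \<forall>q\<in>P. p \<noteq> q \<longrightarrow> line_through p q \<in> \<L>) \<and>
     (\<forall>p\<in>P. \<forall>q\<in>P. p \<noteq> q \<longrightarrow> perp_bisector p q \<in> \<L>) \<and>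
     (\<forall>L1\<in>\<L>. \<forall>L2\<in>\<L>. \<forall>L. L1 \<noteq> L2 \<longrightarrow> equidistant_line L L1 L2 \<longrightarrow> L \<in> \<L>) \<and>
     (\<forall>L1\<in>\<L>. \<forall>L2\<in>\<L>. reflect L1 ` L2 \<in> \<L>)"

definition origami_closed :: "point set \<Rightarrow> bool" where
  "origami_closed P \<longleftrightarrow> (\<exists>\<L>. origami_pair P \<L>)"

definition origami_points :: "point set" where
  "origami_points = \<Inter>{P. (0, 0) \<in> P \<and> (0, 1) \<in> P \<and> origami_closed P}"

definition origami_numbers :: "real set" where
  "origami_numbers = {\<alpha>. \<exists>v1\<in>origami_points. \<exists>v2\<in>origami_points. \<bar>\<alpha>\<bar> = dist v1 v2}"

end

(* Reflection in any line of the pair maps P into P: a point p of P is the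
   only common point of the lines joining it to two points of P not collinear with it, and the
   mirror images of these lines are lines of the pair meeting only in the mirror image of p.
   A third point (1/4,1/4) of P, obtained from the y-axis, the perpendicular bisector of
   (0,0) and (0,1) and an angle bisector of these two lines, guarantees such a pair of points.
   Reflections in the axes and in the diagonal give the sign changes and (x,y) |-> (y,x), and
   with them the projection (x,y) |-> (x,0).  The reflection in the perpendicular bisector of v and 0
   is an isometry moving v to 0, and the reflection in the bisector of the x-axis and the
   line through 0 and w turns w into (|w|,0).  Hence (x,0) lies
   in P iff |x| is a distance between two points of P, and (x,y) lies in P iff (x,0) and (y,0)
   do; intersecting over all such P gives the theorem. *)

theory Submission
  imports Defs
begin

definition coord_line :: "real \<Rightarrow> real \<Rightarrow> real \<Rightarrow> point set" where
  "coord_line a b c = {(x, y). a * x + b * y = c}"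

lemma mem_coord_line [simp]: "(x, y) \<in> coord_line a b c \<longleftrightarrow> a * x + b * y = c"
  by (simp add: coord_line_def)

lemma dist_point: "dist (x1::real, y1::real) (x2, y2) = sqrt ((x1 - x2)^2 + (y1 - y2)^2)"
  by (simp add: dist_Pair_Pair dist_real_def)

lemma is_line_coord_line: "(a, b) \<noteq> (0, 0) \<Longrightarrow> is_line (coord_line a b c)"
  unfolding is_line_def coord_line_def by blast

lemma is_lineE:
  assumes "is_line L"
  obtains a b c where "(a, b) \<noteq> (0, 0)" "L = coord_line a b c"
  using assms unfolding is_line_def coord_line_def by blast

lemma sum_squares_pos: "(a::real, b) \<noteq> (0, 0) \<Longrightarrow> a^2 + b^2 > 0"
  by (simp add: sum_power2_gt_zero_iff)

lemma coord_line_scale: "k \<noteq> 0 \<Longrightarrow> coord_line (k * a) (k * b) (k * c) = coord_line a b c"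
  by (auto simp: coord_line_def mult.assoc simp flip: distrib_left)

lemma coord_line_eq_imp_proportional:
  assumes ab: "(a, b) \<noteq> (0, 0)" and eq: "coord_line a b c = coord_line a' b' c'"
  obtains k where "a' = k * a" "b' = k * b" "c' = k * c"
proof
  define n where "n = a^2 + b^2"
  define k where "k = (a * a' + b * b') / n"
  have n: "n \<noteq> 0" using sum_squares_pos[OF ab] unfolding n_def by linarith
  have foot: "a * (c * a / n) + b * (c * b / n) = c"
    using n by (simp add: field_simps) (simp add: n_def power2_eq_square algebra_simps)
  then have "(c * a / n, c * b / n) \<in> coord_line a b c" by simp
  moreover have "(c * a / n - b, c * b / n + a) \<in> coord_line a b c"
    using n by (simp add: field_simps) (simp add: n_def power2_eq_square algebra_simps)
  ultimately have on: "a' * (c * a / n) + b' * (c * b / n) = c'"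
      "a' * (c * a / n - b) + b' * (c * b / n + a) = c'"
    using eq by simp_all
  then have perp: "a * b' = b * a'" by (simp add: algebra_simps)
  show a': "a' = k * a" and b': "b' = k * b"
    using n perp by (simp_all add: k_def n_def field_simps power2_eq_square)
  have "c' = k * (a * (c * a / n) + b * (c * b / n))"
    using on(1) by (simp add: a' b' algebra_simps)
  then show "c' = k * c" by (simp only: foot)
qed

lemma line_through_coord_line:
  assumes "(p1, p2) \<noteq> (q1, q2)"
  shows "line_through (p1, p2) (q1, q2)
    = coord_line (q2 - p2) (p1 - q1) ((q2 - p2) * p1 + (p1 - q1) * p2)"
proof (intro set_eqI iffI; clarify)
  fix r1 r2
  assume "(r1, r2) \<in> line_through (p1, p2) (q1, q2)"
  then obtain t where r: "r1 = p1 + t * (q1 - p1)" "r2 = p2 + t * (q2 - p2)"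
    unfolding line_through_def by auto
  show "(r1, r2) \<in> coord_line (q2 - p2) (p1 - q1) ((q2 - p2) * p1 + (p1 - q1) * p2)"
    by (simp add: r algebra_simps)
next
  fix r1 r2
  assume "(r1, r2) \<in> coord_line (q2 - p2) (p1 - q1) ((q2 - p2) * p1 + (p1 - q1) * p2)"
  then have par: "(q2 - p2) * (r1 - p1) = (q1 - p1) * (r2 - p2)" by (simp add: algebra_simps)
  define n where "n = (q1 - p1)^2 + (q2 - p2)^2"
  have n: "n \<noteq> 0" using assms by (auto simp: n_def sum_power2_eq_zero_iff)
  define t where "t = ((r1 - p1) * (q1 - p1) + (r2 - p2) * (q2 - p2)) / n"
  have tn: "t * n = (r1 - p1) * (q1 - p1) + (r2 - p2) * (q2 - p2)"
    using n by (simp add: t_def)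
  have "(r1 - p1 - t * (q1 - p1)) * n = 0" "(r2 - p2 - t * (q2 - p2)) * n = 0"
    using tn par n_def by algebra+
  then have "r1 = p1 + t * (q1 - p1)" "r2 = p2 + t * (q2 - p2)"
    using n by simp_all
  then show "(r1, r2) \<in> line_through (p1, p2) (q1, q2)"
    unfolding line_through_def by auto
qed

lemma perp_bisector_coord_line:
  "perp_bisector (p1, p2) (q1, q2)
    = coord_line (2 * (q1 - p1)) (2 * (q2 - p2)) (q1^2 + q2^2 - p1^2 - p2^2)"
  unfolding perp_bisector_def coord_line_def
  by (auto simp: dist_point algebra_simps power2_eq_square)

lemma coord_line_Int_coord_line:
  assumes det: "a * e - b * d \<noteq> 0" and "a * x + b * y = c" "d * x + e * y = f"
  shows "coord_line a b c \<inter> coord_line d e f = {(x, y)}"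
proof (rule set_eqI, clarify, rule iffI)
  fix u v
  assume "(u, v) \<in> coord_line a b c \<inter> coord_line d e f"
  then have uv: "a * (u - x) + b * (v - y) = 0" "d * (u - x) + e * (v - y) = 0"
    using assms by (simp_all add: algebra_simps)
  have "(a * e - b * d) * (u - x) = 0" using uv by algebra
  moreover have "(a * e - b * d) * (v - y) = 0" using uv by algebra
  ultimately show "(u, v) \<in> {(x, y)}" using det by simp
qed (use assms in simp)

lemma norm_Pair_real: "norm (a::real, b::real) = sqrt (a^2 + b^2)"
  by (simp add: norm_Pair)

lemma infdist_coord_line:
  assumes ab: "(a, b) \<noteq> (0, 0)"
  shows "infdist (x, y) (coord_line a b c) = \<bar>a * x + b * y - c\<bar> / sqrt (a^2 + b^2)"
proof -
  define s where "s = a * x + b * y - c"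
  define n where "n = a^2 + b^2"
  have n: "n > 0" unfolding n_def by (rule sum_squares_pos[OF ab])
  define f where "f = (x, y) - (s / n) *\<^sub>R (a, b)"
  have "a * fst f + b * snd f = a * x + b * y - s / n * n"
    by (simp add: f_def n_def power2_eq_square algebra_simps add_divide_distrib)
  then have f: "f \<in> coord_line a b c"
    using n by (cases f) (simp add: s_def)
  have "dist (x, y) f = \<bar>s / n\<bar> * sqrt n"
    by (simp add: f_def dist_norm norm_Pair_real n_def del: scaleR_Pair)
  also have "\<dots> = \<bar>s\<bar> / sqrt n"
    using n by (simp add: abs_div field_simps)
  finally have dist_f: "dist (x, y) f = \<bar>s\<bar> / sqrt n" .
  have lower: "\<bar>s\<bar> / sqrt n \<le> dist (x, y) z" if z: "z \<in> coord_line a b c" for z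
  proof -
    have "s = (a, b) \<bullet> ((x, y) - z)"
      using z by (cases z) (simp add: s_def algebra_simps)
    also have "\<bar>\<dots>\<bar> \<le> sqrt n * dist (x, y) z"
      using Cauchy_Schwarz_ineq2[of "(a, b)" "(x, y) - z"]
      by (simp add: dist_norm norm_Pair_real n_def)
    finally show ?thesis
      using n by (simp add: divide_le_eq mult.commute)
  qed
  have "infdist (x, y) (coord_line a b c) = \<bar>s\<bar> / sqrt n"
  proof (rule antisym)
    show "infdist (x, y) (coord_line a b c) \<le> \<bar>s\<bar> / sqrt n"
      using infdist_le[OF f, of "(x, y)"] by (simp only: dist_f)
    show "\<bar>s\<bar> / sqrt n \<le> infdist (x, y) (coord_line a b c)"
      using f lower by (subst infdist_notempty) (auto intro!: cINF_greatest)
  qed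
  then show ?thesis by (simp add: s_def n_def)
qed

definition coord_reflection :: "real \<Rightarrow> real \<Rightarrow> real \<Rightarrow> point \<Rightarrow> point" where
  "coord_reflection a b c =
     (\<lambda>(x, y). let t = 2 * (a * x + b * y - c) / (a^2 + b^2) in (x - t * a, y - t * b))"

lemma coord_reflection_Pair:
  assumes "t = 2 * (a * x + b * y - c) / (a^2 + b^2)"
  shows "coord_reflection a b c (x, y) = (x - t * a, y - t * b)"
  using assms by (simp add: coord_reflection_def Let_def)

lemma coord_reflection_param_uminus:
  fixes a b c x y t :: real
  assumes ab: "(a, b) \<noteq> (0, 0)" and t: "t = 2 * (a * x + b * y - c) / (a^2 + b^2)"
  shows "2 * (a * (x - t * a) + b * (y - t * b) - c) / (a^2 + b^2) = - t"
proof -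
  have n: "a^2 + b^2 \<noteq> 0" using sum_squares_pos[OF ab] by linarith
  then have "t * (a^2 + b^2) = 2 * (a * x + b * y - c)" using t by simp
  then have "2 * (a * (x - t * a) + b * (y - t * b) - c) = - t * (a^2 + b^2)"
    by (simp add: algebra_simps power2_eq_square)
  then show ?thesis using n by (simp add: divide_eq_eq)
qed

lemma coord_reflection_involution:
  assumes ab: "(a, b) \<noteq> (0, 0)"
  shows "coord_reflection a b c (coord_reflection a b c p) = p"
proof -
  obtain x y where p: "p = (x, y)" by fastforce
  define t where "t = 2 * (a * x + b * y - c) / (a^2 + b^2)"
  show ?thesis
    using coord_reflection_Pair[OF t_def]
      coord_reflection_Pair[OF coord_reflection_param_uminus[OF ab t_def, symmetric]] p
    by simp
qed

lemma dist_coord_reflection: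
  assumes ab: "(a, b) \<noteq> (0, 0)"
  shows "dist (coord_reflection a b c p) (coord_reflection a b c q) = dist p q"
proof -
  obtain x y u v where p: "p = (x, y)" and q: "q = (u, v)" by fastforce
  define n where "n = a^2 + b^2"
  define t where "t = 2 * (a * x + b * y - c) / n"
  define s where "s = 2 * (a * u + b * v - c) / n"
  have n: "n \<noteq> 0" using sum_squares_pos[OF ab] unfolding n_def by linarith
  have "t * n = 2 * (a * x + b * y - c)" "s * n = 2 * (a * u + b * v - c)"
    using n by (simp_all add: t_def s_def)
  then have ts: "2 * (a * (x - u) + b * (y - v)) = (t - s) * n"
    by algebra
  then have "((x - t * a) - (u - s * a))^2 + ((y - t * b) - (v - s * b))^2 = (x - u)^2 + (y - v)^2"
    unfolding n_def by algebra
  then show ?thesis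
    using coord_reflection_Pair[OF t_def[unfolded n_def]]
      coord_reflection_Pair[OF s_def[unfolded n_def]]
    by (simp add: p q dist_point)
qed

definition mirror_image :: "point set \<Rightarrow> point \<Rightarrow> point \<Rightarrow> bool" where
  "mirror_image L p q \<longleftrightarrow> (p \<in> L \<and> q = p) \<or> (p \<notin> L \<and> q \<noteq> p \<and> perp_bisector p q = L)"

lemma mirror_image_coord_reflection:
  assumes ab: "(a, b) \<noteq> (0, 0)"
  shows "mirror_image (coord_line a b c) p (coord_reflection a b c p)"
proof -
  obtain x y where p: "p = (x, y)" by fastforce
  define n where "n = a^2 + b^2"
  define s where "s = a * x + b * y - c"
  define t where "t = 2 * s / n"
  have n: "n \<noteq> 0" using sum_squares_pos[OF ab] unfolding n_def by linarith
  have r: "coord_reflection a b c (x, y) = (x - t * a, y - t * b)"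
    by (rule coord_reflection_Pair) (simp add: t_def s_def n_def)
  show ?thesis
  proof (cases "s = 0")
    case True
    then show ?thesis using r p by (simp add: mirror_image_def t_def s_def)
  next
    case False
    then have t: "t \<noteq> 0" using n by (simp add: t_def)
    have "perp_bisector p (coord_reflection a b c p)
        = coord_line (-2 * t * a) (-2 * t * b) ((x - t * a)^2 + (y - t * b)^2 - x^2 - y^2)"
      unfolding p r perp_bisector_coord_line by (simp add: algebra_simps)
    also have "(x - t * a)^2 + (y - t * b)^2 - x^2 - y^2 = -2 * t * c"
    proof -
      have "(x - t * a)^2 + (y - t * b)^2 - x^2 - y^2 = t * (t * n - 2 * (a * x + b * y))"
        by (simp add: n_def power2_eq_square algebra_simps)
      also have "t * n = 2 * s" using n by (simp add: t_def)
      finally show ?thesis by (simp add: s_def algebra_simps)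
    qed
    also have "coord_line (-2 * t * a) (-2 * t * b) (-2 * t * c) = coord_line a b c"
      by (rule coord_line_scale) (use t in simp)
    finally show ?thesis
      using False t ab r p by (auto simp: mirror_image_def s_def)
  qed
qed

lemma mirror_image_unique:
  assumes ab: "(a, b) \<noteq> (0, 0)" and q: "mirror_image (coord_line a b c) p q"
  shows "q = coord_reflection a b c p"
proof -
  obtain x y u v where p: "p = (x, y)" and qq: "q = (u, v)" by fastforce
  define s where "s = a * x + b * y - c"
  define t where "t = 2 * s / (a^2 + b^2)"
  have r: "coord_reflection a b c (x, y) = (x - t * a, y - t * b)"
    by (rule coord_reflection_Pair) (simp add: t_def s_def)
  show ?thesis
  proof (cases "p \<in> coord_line a b c")
    case True
    then show ?thesis using q r p by (simp add: mirror_image_def t_def s_def)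
  next
    case False
    with q have "coord_line a b c = coord_line (2 * (u - x)) (2 * (v - y)) (u^2 + v^2 - x^2 - y^2)"
      and "q \<noteq> p"
      by (simp_all add: mirror_image_def p qq perp_bisector_coord_line)
    then obtain k
      where k: "2 * (u - x) = k * a" "2 * (v - y) = k * b" "u^2 + v^2 - x^2 - y^2 = k * c"
      using coord_line_eq_imp_proportional[OF ab] by metis
    then have uv: "u = x + k / 2 * a" "v = y + k / 2 * b" by simp_all
    have "k \<noteq> 0" using \<open>q \<noteq> p\<close> uv p qq by auto
    moreover have "k * (k * (a^2 + b^2) + 4 * s) = 0"
      using k(3) unfolding uv s_def by (simp add: power2_eq_square algebra_simps)
    ultimately have kn: "k * (a^2 + b^2) = - 4 * s"
      by simp
    have "k = k * (a^2 + b^2) / (a^2 + b^2)"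
      using ab by simp
    also have "\<dots> = - 2 * t"
      unfolding kn t_def by simp
    finally have "k = - 2 * t" .
    then show ?thesis using uv r p qq by simp
  qed
qed

lemma reflect_coord_line:
  assumes "(a, b) \<noteq> (0, 0)"
  shows "reflect (coord_line a b c) p = coord_reflection a b c p"
  unfolding reflect_def mirror_image_def[symmetric]
  using mirror_image_coord_reflection[OF assms] mirror_image_unique[OF assms]
  by (rule some_equality)

lemma reflect_eqI: "is_line L \<Longrightarrow> mirror_image L p q \<Longrightarrow> reflect L p = q"
  by (metis is_lineE mirror_image_unique reflect_coord_line)

lemma is_line_perp_bisector: "p \<noteq> q \<Longrightarrow> is_line (perp_bisector p q)"
  by (cases p, cases q) (auto simp: perp_bisector_coord_line intro!: is_line_coord_line)

lemma reflect_perp_bisector: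
  assumes "p \<noteq> q"
  shows "reflect (perp_bisector p q) p = q"
proof (rule reflect_eqI)
  show "is_line (perp_bisector p q)" using assms by (rule is_line_perp_bisector)
  have "p \<notin> perp_bisector p q" using assms by (simp add: perp_bisector_def)
  then show "mirror_image (perp_bisector p q) p q" using assms by (simp add: mirror_image_def)
qed

lemma inj_reflect: "is_line L \<Longrightarrow> inj (reflect L)"
  by (metis is_lineE coord_reflection_involution reflect_coord_line inj_on_inverseI)

lemma dist_reflect: "is_line L \<Longrightarrow> dist (reflect L p) (reflect L q) = dist p q"
  by (metis is_lineE dist_coord_reflection reflect_coord_line)

(* The line through 0 in direction (d + w1, w2) = d (1, 0) + (w1, w2), the sum of two vectors
   of length d, bisects the angle between the x-axis and the line through 0 and (w1, w2). *)
lemma equidistant_axis_bisector: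
  assumes w2: "w2 \<noteq> 0" and d: "d = sqrt (w1^2 + w2^2)"
  shows "equidistant_line (coord_line w2 (- (d + w1)) 0)
    (coord_line 0 1 0) (coord_line w2 (- w1) 0)"
  unfolding equidistant_line_def
proof (intro conjI ballI)
  show "is_line (coord_line w2 (- (d + w1)) 0)"
    using w2 by (simp add: is_line_coord_line)
  fix r
  assume r: "r \<in> coord_line w2 (- (d + w1)) 0"
  obtain r1 r2 where rr: "r = (r1, r2)" by fastforce
  have "w2 * r1 - w1 * r2 = d * r2"
    using r rr by (simp add: algebra_simps)
  moreover have "sqrt (w2^2 + (- w1)^2) = d"
    using d by (simp add: add.commute)
  moreover have "d > 0" using w2 d by (simp add: sum_power2_gt_zero_iff)
  ultimately have "infdist r (coord_line w2 (- w1) 0) = \<bar>r2\<bar>"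
    using w2 by (simp add: rr infdist_coord_line abs_mult)
  moreover have "infdist r (coord_line 0 1 0) = \<bar>r2\<bar>"
    by (simp add: rr infdist_coord_line)
  ultimately show "infdist r (coord_line 0 1 0) = infdist r (coord_line w2 (- w1) 0)"
    by simp
qed

lemma reflect_axis_bisector:
  assumes w2: "w2 \<noteq> 0" and d: "d = sqrt (w1^2 + w2^2)"
  shows "reflect (coord_line w2 (- (d + w1)) 0) (w1, w2) = (d, 0)"
proof -
  have "\<bar>w1\<bar> < d" using w2 d by (simp add: real_less_rsqrt)
  then have dpos: "d > 0" and dw: "d + w1 > 0" by linarith+
  have w: "w2^2 = (d + w1) * (d - w1)" using d by (simp add: power2_eq_square algebra_simps)
  define t where "t = - w2 / (d + w1)"
  have "w2^2 + (- (d + w1))^2 = 2 * d * (d + w1)"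
    unfolding w by (simp add: power2_eq_square algebra_simps)
  moreover have "w2 * w1 + - (d + w1) * w2 - 0 = - d * w2"
    by (simp add: algebra_simps)
  ultimately have "t = 2 * (w2 * w1 + - (d + w1) * w2 - 0) / (w2^2 + (- (d + w1))^2)"
    using dpos dw by (simp add: t_def)
  then have "reflect (coord_line w2 (- (d + w1)) 0) (w1, w2) = (w1 - t * w2, w2 - t * - (d + w1))"
    using w2 by (simp add: reflect_coord_line coord_reflection_Pair)
  also have "\<dots> = (d, 0)"
    using dw w by (simp add: t_def field_simps power2_eq_square)
  finally show ?thesis .
qed

locale origami_frame =
  fixes P :: "point set" and \<L> :: "point set set"
  assumes is_line_mem: "L \<in> \<L> \<Longrightarrow> is_line L"
    and Int_singleton_mem: "L1 \<in> \<L> \<Longrightarrow> L2 \<in> \<L> \<Longrightarrow> L1 \<inter> L2 = {p} \<Longrightarrow> p \<in> P"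
    and line_through_mem: "p \<in> P \<Longrightarrow> q \<in> P \<Longrightarrow> p \<noteq> q \<Longrightarrow> line_through p q \<in> \<L>"
    and perp_bisector_mem: "p \<in> P \<Longrightarrow> q \<in> P \<Longrightarrow> p \<noteq> q \<Longrightarrow> perp_bisector p q \<in> \<L>"
    and equidistant_line_mem:
      "L1 \<in> \<L> \<Longrightarrow> L2 \<in> \<L> \<Longrightarrow> L1 \<noteq> L2 \<Longrightarrow> equidistant_line L L1 L2 \<Longrightarrow> L \<in> \<L>"
    and reflect_image_mem: "M \<in> \<L> \<Longrightarrow> L \<in> \<L> \<Longrightarrow> reflect M ` L \<in> \<L>"
    and origin_mem: "(0, 0) \<in> P"
    and unit_mem: "(0, 1) \<in> P"

lemma origami_frame_iff:
  "origami_frame P \<L> \<longleftrightarrow> origami_pair P \<L> \<and> (0, 0) \<in> P \<and> (0, 1) \<in> P"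
  unfolding origami_frame_def origami_pair_def by (simp add: Ball_def)

context origami_frame
begin

lemma reflect_mem_if_not_collinear:
  assumes M: "M \<in> \<L>" and p: "(x, y) \<in> P" and a: "(a1, a2) \<in> P" and b: "(b1, b2) \<in> P"
    and det: "(a1 - x) * (b2 - y) - (a2 - y) * (b1 - x) \<noteq> 0"
  shows "reflect M (x, y) \<in> P"
proof -
  have pa: "(x, y) \<noteq> (a1, a2)" and pb: "(x, y) \<noteq> (b1, b2)"
    using det by auto
  define A where "A = line_through (x, y) (a1, a2)"
  define B where "B = line_through (x, y) (b1, b2)"
  have "A \<in> \<L>" "B \<in> \<L>"
    using p a b pa pb by (simp_all add: A_def B_def line_through_mem)
  moreover have "A \<inter> B = {(x, y)}"
    unfolding A_def B_def line_through_coord_line[OF pa] line_through_coord_line[OF pb]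
    by (rule coord_line_Int_coord_line) (use det in \<open>simp_all add: algebra_simps\<close>)
  then have "reflect M ` A \<inter> reflect M ` B = {reflect M (x, y)}"
    by (simp add: image_Int[OF inj_reflect[OF is_line_mem[OF M]], symmetric])
  ultimately show ?thesis
    using Int_singleton_mem reflect_image_mem[OF M] by blast
qed

lemma y_axis_mem: "coord_line 1 0 0 \<in> \<L>"
  using line_through_mem[OF origin_mem unit_mem] by (simp add: line_through_coord_line)

(* Every point of the plane is non-collinear with two of (0,0), (0,1), (1/4,1/4). *)
lemma quarter_point_mem: "(1/4, 1/4) \<in> P"
proof -
  have horizontal_half: "coord_line 0 2 1 \<in> \<L>"
    using perp_bisector_mem[OF origin_mem unit_mem] by (simp add: perp_bisector_coord_line)
  have half_point: "(0, 1/2) \<in> P"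
    by (rule Int_singleton_mem[OF y_axis_mem horizontal_half], rule coord_line_Int_coord_line)
      simp_all
  have "(0, 0) \<in> coord_line 1 0 0 - coord_line 0 2 1"
    by simp
  then have "coord_line 1 0 0 \<noteq> coord_line 0 2 1"
    by blast
  moreover have "equidistant_line (coord_line 1 1 (1/2)) (coord_line 1 0 0) (coord_line 0 2 1)"
    unfolding equidistant_line_def
  proof (intro conjI ballI)
    show "is_line (coord_line 1 1 (1/2))" by (simp add: is_line_coord_line)
    fix r
    assume "r \<in> coord_line 1 1 (1/2)"
    then obtain r1 where "r = (r1, 1/2 - r1)"
      by (cases r) (auto simp: algebra_simps)
    then show "infdist r (coord_line 1 0 0) = infdist r (coord_line 0 2 1)"
      by (simp add: infdist_coord_line abs_minus_commute)
  qed
  ultimately have diagonal: "coord_line 1 1 (1/2) \<in> \<L>"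
    using equidistant_line_mem[OF y_axis_mem horizontal_half] by blast
  have "perp_bisector (0, 0) (0, 1/2) = coord_line 0 1 (1/4)"
    unfolding perp_bisector_coord_line by (simp add: power2_eq_square)
  then have horizontal_quarter: "coord_line 0 1 (1/4) \<in> \<L>"
    using perp_bisector_mem[OF origin_mem half_point] by simp
  show ?thesis
    by (rule Int_singleton_mem[OF diagonal horizontal_quarter], rule coord_line_Int_coord_line)
      simp_all
qed


lemma reflect_mem:
  assumes M: "M \<in> \<L>" and "p \<in> P"
  shows "reflect M p \<in> P"
proof -
  obtain x y where xy: "p = (x, y)" by fastforce
  with \<open>p \<in> P\<close> have p: "(x, y) \<in> P" by simp
  consider "x \<noteq> 0" | "x = 0" "y \<noteq> 0" | "x = 0" "y = 0" by blast
  then have "reflect M (x, y) \<in> P"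
  proof cases
    case 1
    show ?thesis
      by (rule reflect_mem_if_not_collinear[OF M p origin_mem unit_mem])
        (use 1 in \<open>simp add: algebra_simps\<close>)
  next
    case 2
    show ?thesis
      by (rule reflect_mem_if_not_collinear[OF M p origin_mem quarter_point_mem]) (use 2 in simp)
  next
    case 3
    show ?thesis
      by (rule reflect_mem_if_not_collinear[OF M p unit_mem quarter_point_mem]) (use 3 in simp)
  qed
  then show ?thesis using xy by simp
qed

lemma swap_mem:
  assumes "(x, y) \<in> P"
  shows "(y, x) \<in> P"
proof -
  have "line_through (0, 0) (1/4, 1/4) = coord_line (1/4) (-1/4) 0"
    by (simp add: line_through_coord_line)
  then have diagonal: "coord_line (1/4) (-1/4) 0 \<in> \<L>"
    using line_through_mem[OF origin_mem quarter_point_mem] by simp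
  have "reflect (coord_line (1/4) (-1/4) 0) (x, y) = (y, x)"
    by (simp add: reflect_coord_line coord_reflection_def Let_def field_simps)
  then show ?thesis
    using reflect_mem[OF diagonal assms] by simp
qed

lemma x_axis_mem: "coord_line 0 1 0 \<in> \<L>"
proof -
  have "line_through (0, 0) (1, 0) = coord_line 0 1 0"
    by (auto simp: line_through_coord_line coord_line_def)
  then show ?thesis
    using line_through_mem[OF origin_mem swap_mem[OF unit_mem]] by simp
qed

lemma uminus_snd_mem: "(x, y) \<in> P \<Longrightarrow> (x, - y) \<in> P"
  using reflect_mem[OF x_axis_mem, of "(x, y)"]
  by (simp add: reflect_coord_line coord_reflection_def Let_def)

lemma uminus_fst_mem: "(x, y) \<in> P \<Longrightarrow> (- x, y) \<in> P"
  using reflect_mem[OF y_axis_mem, of "(x, y)"]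
  by (simp add: reflect_coord_line coord_reflection_def Let_def)

lemma fst_axis_mem:
  assumes p: "(x, y) \<in> P"
  shows "(x, 0) \<in> P"
proof (cases "y = 0")
  case True
  then show ?thesis using p by simp
next
  case False
  then have ne: "(x, y) \<noteq> (x, - y)" by simp
  have "line_through (x, y) (x, - y) \<in> \<L>"
    using line_through_mem[OF p uminus_snd_mem[OF p] ne] .
  moreover have "line_through (x, y) (x, - y) \<inter> coord_line 0 1 0 = {(x, 0)}"
    unfolding line_through_coord_line[OF ne]
    by (rule coord_line_Int_coord_line) (use False in \<open>simp_all add: algebra_simps\<close>)
  ultimately show ?thesis
    using Int_singleton_mem[OF _ x_axis_mem] by blast
qed

lemma norm_axis_mem:
  assumes w: "(w1, w2) \<in> P"
  shows "(sqrt (w1^2 + w2^2), 0) \<in> P"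
proof (cases "w2 = 0")
  case True
  then show ?thesis
    using w uminus_fst_mem[OF w] by (cases "w1 \<ge> 0") simp_all
next
  case False
  define d where "d = sqrt (w1^2 + w2^2)"
  have "(0, 0) \<noteq> (w1, w2)" using False by simp
  then have "line_through (0, 0) (w1, w2) \<in> \<L>"
    using line_through_mem[OF origin_mem w] by simp
  then have "coord_line w2 (- w1) 0 \<in> \<L>"
    using \<open>(0, 0) \<noteq> (w1, w2)\<close> by (simp add: line_through_coord_line)
  moreover have "(1, 0) \<in> coord_line 0 1 0 - coord_line w2 (- w1) 0"
    using False by simp
  then have "coord_line 0 1 0 \<noteq> coord_line w2 (- w1) 0"
    by blast
  ultimately have "coord_line w2 (- (d + w1)) 0 \<in> \<L>"
    using equidistant_line_mem[OF x_axis_mem] equidistant_axis_bisector[OF False d_def] by blast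
  then have "reflect (coord_line w2 (- (d + w1)) 0) (w1, w2) \<in> P"
    using reflect_mem w by blast
  then have "(d, 0) \<in> P"
    by (simp only: reflect_axis_bisector[OF False d_def])
  then show ?thesis
    by (simp only: d_def)
qed

lemma dist_axis_mem:
  assumes v1: "v1 \<in> P" and v2: "v2 \<in> P"
  shows "(dist v1 v2, 0) \<in> P"
proof -
  obtain w where w: "w \<in> P" "dist (0, 0) w = dist v1 v2"
  proof (cases "v1 = (0, 0)")
    case True
    then show ?thesis using that v2 by blast
  next
    case False
    then have M: "perp_bisector v1 (0, 0) \<in> \<L>"
      using perp_bisector_mem[OF v1 origin_mem] by simp
    have "dist (0, 0) (reflect (perp_bisector v1 (0, 0)) v2) = dist v1 v2"
      using dist_reflect[OF is_line_mem[OF M], of v1 v2] reflect_perp_bisector[OF False] by simp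
    then show ?thesis using that reflect_mem[OF M v2] by blast
  qed
  obtain w1 w2 where "w = (w1, w2)" by fastforce
  then show ?thesis
    using norm_axis_mem[of w1 w2] w by (simp add: dist_point)
qed

lemma axis_mem_iff: "(x, 0) \<in> P \<longleftrightarrow> (\<exists>v1\<in>P. \<exists>v2\<in>P. \<bar>x\<bar> = dist v1 v2)"
proof
  assume "(x, 0) \<in> P"
  moreover have "\<bar>x\<bar> = dist (0, 0) (x, 0::real)"
    by (simp add: dist_point)
  ultimately show "\<exists>v1\<in>P. \<exists>v2\<in>P. \<bar>x\<bar> = dist v1 v2"
    using origin_mem by blast
next
  assume "\<exists>v1\<in>P. \<exists>v2\<in>P. \<bar>x\<bar> = dist v1 v2"
  then have "(\<bar>x\<bar>, 0) \<in> P"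
    using dist_axis_mem by auto
  then show "(x, 0) \<in> P"
    using uminus_fst_mem by (cases "x \<ge> 0") fastforce+
qed

lemma Pair_mem_iff: "(x, y) \<in> P \<longleftrightarrow> (x, 0) \<in> P \<and> (y, 0) \<in> P"
proof
  assume "(x, y) \<in> P"
  then show "(x, 0) \<in> P \<and> (y, 0) \<in> P"
    using fst_axis_mem swap_mem by blast
next
  assume "(x, 0) \<in> P \<and> (y, 0) \<in> P"
  then have x: "(x, 0) \<in> P" and y: "(0, y) \<in> P"
    using swap_mem by blast+
  show "(x, y) \<in> P"
  proof (cases "x = 0")
    case True
    then show ?thesis using y by simp
  next
    case False
    have "perp_bisector (0, 0) (x, 0) = coord_line (2 * x) 0 (x^2)"
      by (simp add: perp_bisector_coord_line)
    then have "coord_line (2 * x) 0 (x^2) \<in> \<L>"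
      using perp_bisector_mem[OF origin_mem x] False by simp
    moreover have "reflect (coord_line (2 * x) 0 (x^2)) (0, y) = (x, y)"
      using False by (simp add: reflect_coord_line coord_reflection_def Let_def power2_eq_square)
    ultimately show ?thesis
      using reflect_mem[OF _ y] by metis
  qed
qed

end

lemma mem_origami_points_iff: "p \<in> origami_points \<longleftrightarrow> (\<forall>P \<L>. origami_frame P \<L> \<longrightarrow> p \<in> P)"
  by (simp add: origami_points_def origami_closed_def origami_frame_iff) blast

lemma Pair_mem_origami_points_iff:
  "(x, y) \<in> origami_points \<longleftrightarrow> (x, 0) \<in> origami_points \<and> (y, 0) \<in> origami_points"
  unfolding mem_origami_points_iff using origami_frame.Pair_mem_iff by blast

lemma axis_mem_origami_points_iff: "(x, 0) \<in> origami_points \<longleftrightarrow> x \<in> origami_numbers"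
proof
  assume "(x, 0) \<in> origami_points"
  moreover have "(0, 0) \<in> origami_points"
    by (simp add: mem_origami_points_iff origami_frame.origin_mem)
  moreover have "\<bar>x\<bar> = dist (0, 0) (x, 0::real)"
    by (simp add: dist_point)
  ultimately show "x \<in> origami_numbers"
    unfolding origami_numbers_def by blast
next
  assume "x \<in> origami_numbers"
  then obtain v1 v2 where v: "v1 \<in> origami_points" "v2 \<in> origami_points" "\<bar>x\<bar> = dist v1 v2"
    unfolding origami_numbers_def by blast
  show "(x, 0) \<in> origami_points"
    unfolding mem_origami_points_iff
  proof (intro allI impI)
    fix P \<L>
    assume frame: "origami_frame P \<L>"
    then have "v1 \<in> P" "v2 \<in> P"
      using v unfolding mem_origami_points_iff by blast+
    then show "(x, 0) \<in> P"
      using origami_frame.axis_mem_iff[OF frame] v(3) by blast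
  qed
qed

theorem mainTheorem2:
  fixes x y :: real
  shows "(x, y) \<in> origami_points \<longleftrightarrow> x \<in> origami_numbers \<and> y \<in> origami_numbers"
  using Pair_mem_origami_points_iff axis_mem_origami_points_iff by blast

end
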